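(* In the truncated Gale–Shapley algorithm described in the context, with a weight function $w$ respecting the preferences, for every $i\ge 2$ we have $f_i(R)\le w(L_i)-w(L_{i-1})$.
   Context: Instance: a simple bipartite graph $\mathcal{G}=(R\cup B,E)$ (red nodes $R$, blue nodes $B$) without isolated nodes, each node having a linear preference order on its neighbours. Algorithm (distributed Gale–Shapley): each blue $b$ keeps $p(b)$ (current partner or $\bot$), initially $\bot$. Each red $r$ keeps a list $C(r)$, initially all neighbours in decreasing preference; $c(r)$ (candidate awaiting response, or $\bot$), initially $\bot$; $p(r)$ (partner or $\bot$), initially $\bot$. Each round consists of a blue turn then a red turn. Blue turn, for each $b$: let $P$ be the set of neighbours that sent `propose'; if $P=\emptyset$ do nothing. Otherwise let $Q=P\cup\{p(b)\}$ if $p(b)\ne\bot$, else $Q=P$; let $q$ be $b$'s most preferred node in $Q$; if $q\ne p(b)$, send `break' to $p(b)$ (if $p(b)\ne\bot$), send `accept' to $q$, and set $p(b)\gets q$; send `reject' to every $r\in P\setminus\{q\}$. Red turn, for each $r$: (1) if $c(r)\neq\bot$, receive the message from $c(r)$; if `accept' set $p(r)\gets c(r)$; if `reject' remove $c(r)$ from $C(r)$; then set $c(r)\gets\bot$. (2) If $p(r)\ne\bot$ and $p(r)$ sent `break', remove $p(r)$ from $C(r)$ and set $p(r)\gets\bot$. (3) If $p(r)=\bot$ and $C(r)$ is nonempty, set $c(r)$ to the first element of $C(r)$ and send `propose' to it. Notation: a subscript $i$ denotes the value at the end of round $i$. An edge $\{r,b\}$ is lost when $r$ removes $b$ from $C(r)$;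 $L_i\subseteq E$ is the set of edges lost by the end of round $i$. Let $w:E\to\mathbb{Z}_{>0}$ be a weight function respecting preferences: whenever a node $v$ prefers $x$ over $y$, $w(\{v,x\})\ge w(\{v,y\})$; $w(F)=\sum_{e\in F}w(e)$. The potential of $r\in R$ at the end of round $i$ is $f_i(r)=0$ if $r$ is matched ($p_i(r)\neq\bot$) or $C_i(r)$ is empty, and otherwise $f_i(r)=w(\{r,b\})$ where $b$ is the first element of $C_i(r)$; $f_i(R)=\sum_{r\in R}f_i(r)$. *)

theory Defs
  imports Main
begin

text \<open>The preference of node v is the list pref v of its
  neighbours in decreasing order of preference (first = most preferred).
  A single partner map prt is used for all nodes (p(b) for blue b, p(r) for red r);
  lst r is the list C(r) of a red node; cnd r is c(r); lost accumulates the
  lost edges (edges {r,b} such that r removed b from C(r)).\<close>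

record 'v gs_state =
  prt  :: "'v \<Rightarrow> 'v option"
  lst  :: "'v \<Rightarrow> 'v list"
  cnd  :: "'v \<Rightarrow> 'v option"
  lost :: "'v set set"

definition prefers :: "('v \<Rightarrow> 'v list) \<Rightarrow> 'v \<Rightarrow> 'v \<Rightarrow> 'v \<Rightarrow> bool" where
  "prefers pref v x y \<longleftrightarrow>
     (\<exists>i j. i < j \<and> j < length (pref v) \<and> pref v ! i = x \<and> pref v ! j = y)"

definition most_preferred :: "('v \<Rightarrow> 'v list) \<Rightarrow> 'v \<Rightarrow> 'v set \<Rightarrow> 'v" where
  "most_preferred pref v X = (THE q. q \<in> X \<and> (\<forall>y\<in>X. y \<noteq> q \<longrightarrow> prefers pref v q y))"

text \<open>Blue turn: the reds that sent `propose' to b are those whose candidate is b.\<close>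
definition proposers :: "'v set \<Rightarrow> ('v, 'z) gs_state_scheme \<Rightarrow> 'v \<Rightarrow> 'v set" where
  "proposers R s b = {r \<in> R. cnd s r = Some b}"

definition blue_choice :: "'v set \<Rightarrow> ('v \<Rightarrow> 'v list) \<Rightarrow> ('v, 'z) gs_state_scheme \<Rightarrow> 'v \<Rightarrow> 'v" where
  "blue_choice R pref s b = most_preferred pref b (proposers R s b \<union> set_option (prt s b))"

definition sends_accept :: "'v set \<Rightarrow> 'v set \<Rightarrow> ('v \<Rightarrow> 'v list) \<Rightarrow> ('v, 'z) gs_state_scheme \<Rightarrow> 'v \<Rightarrow> 'v \<Rightarrow> bool" where
  "sends_accept R B pref s b r \<longleftrightarrow> b \<in> B \<and> proposers R s b \<noteq> {} \<and>
     Some (blue_choice R pref s b) \<noteq> prt s b \<and> r = blue_choice R pref s b"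

definition sends_reject :: "'v set \<Rightarrow> 'v set \<Rightarrow> ('v \<Rightarrow> 'v list) \<Rightarrow> ('v, 'z) gs_state_scheme \<Rightarrow> 'v \<Rightarrow> 'v \<Rightarrow> bool" where
  "sends_reject R B pref s b r \<longleftrightarrow> b \<in> B \<and> proposers R s b \<noteq> {} \<and>
     r \<in> proposers R s b \<and> r \<noteq> blue_choice R pref s b"

definition sends_break :: "'v set \<Rightarrow> 'v set \<Rightarrow> ('v \<Rightarrow> 'v list) \<Rightarrow> ('v, 'z) gs_state_scheme \<Rightarrow> 'v \<Rightarrow> 'v \<Rightarrow> bool" where
  "sends_break R B pref s b r \<longleftrightarrow> b \<in> B \<and> proposers R s b \<noteq> {} \<and>
     prt s b = Some r \<and> Some (blue_choice R pref s b) \<noteq> prt s b"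

text \<open>Red turn, steps (1) and (2): result is (new p(r), new C(r), set of removed nodes).\<close>
definition red_step1 :: "'v set \<Rightarrow> 'v set \<Rightarrow> ('v \<Rightarrow> 'v list) \<Rightarrow> ('v, 'z) gs_state_scheme \<Rightarrow> 'v
     \<Rightarrow> 'v option \<times> 'v list \<times> 'v set" where
  "red_step1 R B pref s r =
     (case cnd s r of
        None \<Rightarrow> (prt s r, lst s r, {})
      | Some b \<Rightarrow>
          if sends_accept R B pref s b r then (Some b, lst s r, {})
          else if sends_reject R B pref s b r then (prt s r, removeAll b (lst s r), {b})
          else (prt s r, lst s r, {}))"

definition red_step2 :: "'v set \<Rightarrow> 'v set \<Rightarrow> ('v \<Rightarrow> 'v list) \<Rightarrow> ('v, 'z) gs_state_scheme \<Rightarrow> 'v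
     \<Rightarrow> 'v option \<times> 'v list \<times> 'v set" where
  "red_step2 R B pref s r =
     (case red_step1 R B pref s r of (p1, C1, D1) \<Rightarrow>
        (case p1 of
           None \<Rightarrow> (p1, C1, D1)
         | Some b' \<Rightarrow>
             if sends_break R B pref s b' r then (None, removeAll b' C1, insert b' D1)
             else (p1, C1, D1)))"

text \<open>One round = blue turn followed by red turn (step (3) sets the new candidate).\<close>
definition gs_round :: "'v set \<Rightarrow> 'v set \<Rightarrow> ('v \<Rightarrow> 'v list) \<Rightarrow> 'v gs_state \<Rightarrow> 'v gs_state" where
  "gs_round R B pref s =
     \<lparr> prt = (\<lambda>v. if v \<in> B then
                    (if proposers R s v \<noteq> {} then Some (blue_choice R pref s v) else prt s v)
                  else if v \<in> R then fst (red_step2 R B pref s v)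
                  else prt s v),
       lst = (\<lambda>v. if v \<in> R then fst (snd (red_step2 R B pref s v)) else lst s v),
       cnd = (\<lambda>v. if v \<in> R then
                    (if fst (red_step2 R B pref s v) = None \<and> fst (snd (red_step2 R B pref s v)) \<noteq> []
                     then Some (hd (fst (snd (red_step2 R B pref s v)))) else None)
                  else cnd s v),
       lost = lost s \<union> {{r, b} | r b. r \<in> R \<and> b \<in> snd (snd (red_step2 R B pref s r))} \<rparr>"

definition gs_init :: "('v \<Rightarrow> 'v list) \<Rightarrow> 'v gs_state" where
  "gs_init pref = \<lparr> prt = (\<lambda>_. None), lst = pref, cnd = (\<lambda>_. None), lost = {} \<rparr>"

text \<open>State at the end of round i (i = 0: initial state).\<close>
definition gs_state :: "'v set \<Rightarrow> 'v set \<Rightarrow> ('v \<Rightarrow> 'v list) \<Rightarrow> nat \<Rightarrow> 'v gs_state" where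
  "gs_state R B pref i = (gs_round R B pref ^^ i) (gs_init pref)"

definition potential :: "('v set \<Rightarrow> int) \<Rightarrow> 'v gs_state \<Rightarrow> 'v \<Rightarrow> int" where
  "potential w s r = (if prt s r \<noteq> None \<or> lst s r = [] then 0 else w {r, hd (lst s r)})"

end

theory Submission
  imports Defs
begin

text \<open>A red r with f_i(r) \<noteq> 0 is free at the end of round i with a nonempty list. For i \<ge> 2 every
  free red with a nonempty list has a pending proposal to the head b of C(r) when round i starts, and a
  matched red is matched to the head of C(r). So r can only be free with a nonempty list after
  round i if its proposal to that head b was rejected or b broke up with it: it lost the edge
  {r, b} in round i. As C(r) is always a sublist of r's preference list, the new head is weakly less
  preferred than b, whence f_i(r) \<le> w {r, b}. Distinct reds lose distinct edges and weights are
  positive, so summing over R gives the claim.\<close>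

lemma filter_eq_Cons_nth_order:
  assumes "filter P xs = a # ys" and "c \<in> set ys"
  shows "\<exists>i j. i < j \<and> j < length xs \<and> xs ! i = a \<and> xs ! j = c"
  using assms
proof (induction xs arbitrary: ys)
  case Nil
  then show ?case by simp
next
  case (Cons x xs)
  show ?case
  proof (cases "P x")
    case True
    with Cons.prems have "a = x" "c \<in> set xs" by auto
    then obtain j where "j < length xs" "xs ! j = c" by (metis in_set_conv_nth)
    with \<open>a = x\<close> show ?thesis by (intro exI[of _ 0] exI[of _ "Suc j"]) auto
  next
    case False
    with Cons.prems obtain i j where "i < j" "j < length xs" "xs ! i = a" "xs ! j = c"
      using Cons.IH by auto
    then show ?thesis by (intro exI[of _ "Suc i"] exI[of _ "Suc j"]) auto
  qed
qed

lemma prefers_hd_filter: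
  assumes "filter P (pref v) = a # ys" and "c \<in> set ys"
  shows "prefers pref v a c"
  using filter_eq_Cons_nth_order[OF assms] unfolding prefers_def by blast

lemma prefers_asym:
  assumes "distinct (pref v)" and "prefers pref v x y"
  shows "\<not> prefers pref v y x"
  using assms unfolding prefers_def by (metis nth_eq_iff_index_eq order.strict_trans order_less_asym)

lemma most_preferred_in:
  assumes "distinct (pref v)" and "X \<subseteq> set (pref v)" and "X \<noteq> {}"
  shows "most_preferred pref v X \<in> X"
proof -
  have "filter (\<lambda>x. x \<in> X) (pref v) \<noteq> []"
    using assms(2,3) by (auto simp: filter_empty_conv)
  then obtain q ys where q: "filter (\<lambda>x. x \<in> X) (pref v) = q # ys"
    by (meson neq_Nil_conv)
  have "q \<in> X" using q by (metis filter_eq_ConsD)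
  have best: "\<forall>y\<in>X. y \<noteq> q \<longrightarrow> prefers pref v q y"
  proof (intro ballI impI)
    fix y assume "y \<in> X" "y \<noteq> q"
    with assms(2) have "y \<in> set (filter (\<lambda>x. x \<in> X) (pref v))" by auto
    with \<open>y \<noteq> q\<close> have "y \<in> set ys" using q by simp
    then show "prefers pref v q y" using prefers_hd_filter[of _ pref v, OF q] by blast
  qed
  have "most_preferred pref v X = q"
    unfolding most_preferred_def
  proof (rule the_equality)
    fix q' assume q': "q' \<in> X \<and> (\<forall>y\<in>X. y \<noteq> q' \<longrightarrow> prefers pref v q' y)"
    show "q' = q"
    proof (rule ccontr)
      assume "q' \<noteq> q"
      then have "prefers pref v q q'" "prefers pref v q' q" using q' best \<open>q \<in> X\<close> by auto
      then show False using prefers_asym[of pref v, OF assms(1)] by blast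
    qed
  qed (use \<open>q \<in> X\<close> best in blast)
  with \<open>q \<in> X\<close> show ?thesis by simp
qed

lemma removeAll_filter_mem:
  "removeAll x (filter (\<lambda>y. y \<in> A) xs) = filter (\<lambda>y. y \<in> A - {x}) xs"
  by (induction xs) auto

lemma red_step2_cases:
  assumes "cnd s r = None \<or> prt s r = None"
  obtains (idle) "cnd s r = None" "prt s r = None"
      "red_step2 R B pref s r = (None, lst s r, {})"
  | (kept) b where "cnd s r = None" "prt s r = Some b" "\<not> sends_break R B pref s b r"
      "red_step2 R B pref s r = (Some b, lst s r, {})"
  | (broken) b where "cnd s r = None" "prt s r = Some b" "sends_break R B pref s b r"
      "red_step2 R B pref s r = (None, removeAll b (lst s r), {b})"
  | (accepted) b where "cnd s r = Some b" "prt s r = None" "sends_accept R B pref s b r"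
      "red_step2 R B pref s r = (Some b, lst s r, {})"
  | (rejected) b where "cnd s r = Some b" "prt s r = None"
      "\<not> sends_accept R B pref s b r" "sends_reject R B pref s b r"
      "red_step2 R B pref s r = (None, removeAll b (lst s r), {b})"
  | (unanswered) b where "cnd s r = Some b" "prt s r = None"
      "\<not> sends_accept R B pref s b r" "\<not> sends_reject R B pref s b r"
      "red_step2 R B pref s r = (None, lst s r, {})"
proof (cases "cnd s r")
  case None
  then show ?thesis using idle kept broken
    by (cases "prt s r"; cases "sends_break R B pref s (the (prt s r)) r")
       (auto simp: red_step2_def red_step1_def)
next
  case (Some b)
  with assms have "prt s r = None" by simp
  moreover have "sends_accept R B pref s b r \<Longrightarrow> \<not> sends_break R B pref s b r"
    by (auto simp: sends_accept_def sends_break_def)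
  ultimately show ?thesis using Some accepted rejected unanswered
    by (cases "sends_accept R B pref s b r"; cases "sends_reject R B pref s b r")
       (auto simp: red_step2_def red_step1_def sends_accept_def sends_reject_def)
qed

locale gs_setting =
  fixes R B :: "'v set" and E :: "'v set set" and pref :: "'v \<Rightarrow> 'v list"
    and w :: "'v set \<Rightarrow> int"
  assumes disj: "R \<inter> B = {}"
    and edges: "\<forall>e\<in>E. \<exists>r b. r \<in> R \<and> b \<in> B \<and> e = {r, b}"
    and finE: "finite E"
    and no_isolated: "\<forall>v\<in>R \<union> B. \<exists>e\<in>E. v \<in> e"
    and pref_dist: "\<forall>v\<in>R \<union> B. distinct (pref v)"
    and pref_set: "\<forall>v\<in>R \<union> B. set (pref v) = {u. {v, u} \<in> E}"
    and w_pos: "\<forall>e\<in>E. w e > 0"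
    and w_resp: "\<forall>v\<in>R \<union> B. \<forall>x y. prefers pref v x y \<longrightarrow> w {v, x} \<ge> w {v, y}"
begin

lemma finite_R: "finite R"
proof (rule finite_subset)
  show "R \<subseteq> \<Union>E" using no_isolated by blast
  show "finite (\<Union>E)" using finE edges by auto
qed

lemma red_blue_eq:
  assumes "r \<in> R" "b \<in> B" "r' \<in> R" "b' \<in> B" "{r, b} = {r', b'}"
  shows "r = r' \<and> b = b'"
  using assms disj by (metis IntI doubleton_eq_iff empty_iff)

lemma pref_red_edge:
  assumes "r \<in> R" "x \<in> set (pref r)"
  shows "{r, x} \<in> E" "x \<in> B"
proof -
  show "{r, x} \<in> E" using assms pref_set by auto
  then obtain r' b' where "r' \<in> R" "b' \<in> B" "{r, x} = {r', b'}" using edges by blast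
  then show "x \<in> B" using assms(1) disj by (metis IntI doubleton_eq_iff empty_iff)
qed

lemma pref_red_sym:
  assumes "r \<in> R" "x \<in> set (pref r)"
  shows "r \<in> set (pref x)"
  using pref_red_edge[OF assms] pref_set by (auto simp: insert_commute)

lemma gs_round_red:
  assumes "r \<in> R"
  shows "prt (gs_round R B pref s) r = fst (red_step2 R B pref s r)"
    and "lst (gs_round R B pref s) r = fst (snd (red_step2 R B pref s r))"
    and "cnd (gs_round R B pref s) r =
           (if fst (red_step2 R B pref s r) = None \<and> fst (snd (red_step2 R B pref s r)) \<noteq> []
            then Some (hd (fst (snd (red_step2 R B pref s r)))) else None)"
  using assms disj by (auto simp: gs_round_def)

lemma gs_round_blue:
  assumes "b \<in> B"
  shows "prt (gs_round R B pref s) b =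
           (if proposers R s b \<noteq> {} then Some (blue_choice R pref s b) else prt s b)"
  using assms by (simp add: gs_round_def)

lemma lost_gs_round:
  "lost (gs_round R B pref s) =
     lost s \<union> {{r, b} | r b. r \<in> R \<and> b \<in> snd (snd (red_step2 R B pref s r))}"
  by (simp add: gs_round_def)

text \<open>After any round every free red with a nonempty list has just proposed; this is where
  the hypothesis i \<ge> 2 enters.\<close>
definition free_reds_propose :: "'v gs_state \<Rightarrow> bool" where
  "free_reds_propose s \<longleftrightarrow> (\<forall>r\<in>R. prt s r = None \<and> lst s r \<noteq> [] \<longrightarrow> cnd s r \<noteq> None)"

lemma free_reds_propose_round: "free_reds_propose (gs_round R B pref s)"
  unfolding free_reds_propose_def using gs_round_red by simp

text \<open>Keeping C(r) a filter of pref r preserves the preference order; the last clause makes the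
  edges lost in a round disjoint from those lost before.\<close>
definition gs_inv :: "'v gs_state \<Rightarrow> bool" where
  "gs_inv s \<longleftrightarrow>
     (\<forall>r\<in>R. (\<exists>A. lst s r = filter (\<lambda>x. x \<in> A) (pref r))
        \<and> (\<forall>b. cnd s r = Some b \<longrightarrow> prt s r = None \<and> lst s r \<noteq> [] \<and> b = hd (lst s r))
        \<and> (\<forall>b. prt s r = Some b \<longrightarrow> lst s r \<noteq> [] \<and> b = hd (lst s r)))
   \<and> (\<forall>b\<in>B. \<forall>x. prt s b = Some x \<longrightarrow> x \<in> R \<and> prt s x = Some b)
   \<and> (\<forall>e\<in>lost s. \<exists>r b. r \<in> R \<and> b \<in> B \<and> e = {r, b} \<and> e \<in> E \<and> b \<notin> set (lst s r))"

lemma lost_subset_E: "gs_inv s \<Longrightarrow> lost s \<subseteq> E"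
  unfolding gs_inv_def by blast

context
  fixes s assumes inv: "gs_inv s"
begin

lemma gs_inv_lst_filter: "r \<in> R \<Longrightarrow> \<exists>A. lst s r = filter (\<lambda>x. x \<in> A) (pref r)"
  using inv unfolding gs_inv_def by blast

lemma gs_inv_cnd:
  "r \<in> R \<Longrightarrow> cnd s r = Some b \<Longrightarrow> prt s r = None \<and> lst s r \<noteq> [] \<and> b = hd (lst s r)"
  using inv unfolding gs_inv_def by blast

lemma gs_inv_prt_red: "r \<in> R \<Longrightarrow> prt s r = Some b \<Longrightarrow> lst s r \<noteq> [] \<and> b = hd (lst s r)"
  using inv unfolding gs_inv_def by blast

lemma gs_inv_prt_blue: "b \<in> B \<Longrightarrow> prt s b = Some x \<Longrightarrow> x \<in> R \<and> prt s x = Some b"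
  using inv unfolding gs_inv_def by blast

lemma gs_inv_lost:
  "e \<in> lost s \<Longrightarrow> \<exists>r b. r \<in> R \<and> b \<in> B \<and> e = {r, b} \<and> e \<in> E \<and> b \<notin> set (lst s r)"
  using inv unfolding gs_inv_def by blast

lemma lst_subset_pref: "r \<in> R \<Longrightarrow> set (lst s r) \<subseteq> set (pref r)"
  using gs_inv_lst_filter by fastforce

lemma gs_inv_red_step2_cases [consumes 1]:
  assumes "r \<in> R"
  obtains (idle) "cnd s r = None" "prt s r = None"
      "red_step2 R B pref s r = (None, lst s r, {})"
  | (kept) b where "cnd s r = None" "prt s r = Some b" "\<not> sends_break R B pref s b r"
      "red_step2 R B pref s r = (Some b, lst s r, {})"
  | (broken) b where "cnd s r = None" "prt s r = Some b" "sends_break R B pref s b r"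
      "red_step2 R B pref s r = (None, removeAll b (lst s r), {b})"
  | (accepted) b where "cnd s r = Some b" "prt s r = None" "sends_accept R B pref s b r"
      "red_step2 R B pref s r = (Some b, lst s r, {})"
  | (rejected) b where "cnd s r = Some b" "prt s r = None"
      "\<not> sends_accept R B pref s b r" "sends_reject R B pref s b r"
      "red_step2 R B pref s r = (None, removeAll b (lst s r), {b})"
  | (unanswered) b where "cnd s r = Some b" "prt s r = None"
      "\<not> sends_accept R B pref s b r" "\<not> sends_reject R B pref s b r"
      "red_step2 R B pref s r = (None, lst s r, {})"
proof -
  have "cnd s r = None \<or> prt s r = None" using gs_inv_cnd[OF assms] by (cases "cnd s r") auto
  then show ?thesis using that by (rule red_step2_cases)
qed

lemma red_step2_lst_subset:
  "r \<in> R \<Longrightarrow> set (fst (snd (red_step2 R B pref s r))) \<subseteq> set (lst s r)"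
  by (cases rule: gs_inv_red_step2_cases) auto

lemma red_step2_removed:
  assumes "r \<in> R" and "b \<in> snd (snd (red_step2 R B pref s r))"
  shows "lst s r \<noteq> [] \<and> b = hd (lst s r)
     \<and> fst (snd (red_step2 R B pref s r)) = removeAll b (lst s r)"
  using assms(2) gs_inv_cnd[OF assms(1)] gs_inv_prt_red[OF assms(1)]
  by (cases rule: gs_inv_red_step2_cases[OF assms(1)]) auto

lemma gs_inv_round_red:
  assumes r: "r \<in> R"
  defines "s' \<equiv> gs_round R B pref s"
  shows "(\<exists>A. lst s' r = filter (\<lambda>x. x \<in> A) (pref r))
     \<and> (\<forall>b. cnd s' r = Some b \<longrightarrow> prt s' r = None \<and> lst s' r \<noteq> [] \<and> b = hd (lst s' r))
     \<and> (\<forall>b. prt s' r = Some b \<longrightarrow> lst s' r \<noteq> [] \<and> b = hd (lst s' r))"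
proof (intro conjI)
  obtain A where A: "lst s r = filter (\<lambda>x. x \<in> A) (pref r)"
    using gs_inv_lst_filter[OF r] by blast
  have "lst s' r = lst s r \<or> (\<exists>x. lst s' r = removeAll x (lst s r))"
    unfolding s'_def gs_round_red[OF r] by (cases rule: gs_inv_red_step2_cases[OF r]) auto
  then show "\<exists>A. lst s' r = filter (\<lambda>x. x \<in> A) (pref r)"
    using A removeAll_filter_mem by metis
  show "\<forall>b. cnd s' r = Some b \<longrightarrow> prt s' r = None \<and> lst s' r \<noteq> [] \<and> b = hd (lst s' r)"
    unfolding s'_def gs_round_red[OF r] by auto
  show "\<forall>b. prt s' r = Some b \<longrightarrow> lst s' r \<noteq> [] \<and> b = hd (lst s' r)"
    using gs_inv_cnd[OF r] gs_inv_prt_red[OF r] unfolding s'_def gs_round_red[OF r]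
    by (cases rule: gs_inv_red_step2_cases[OF r]) auto
qed

lemma blue_options_in_pref:
  assumes b: "b \<in> B"
  shows "proposers R s b \<union> set_option (prt s b) \<subseteq> set (pref b)"
proof
  fix y assume y: "y \<in> proposers R s b \<union> set_option (prt s b)"
  have "y \<in> R \<and> lst s y \<noteq> [] \<and> b = hd (lst s y)"
  proof (cases "y \<in> proposers R s b")
    case True
    then show ?thesis using gs_inv_cnd by (auto simp: proposers_def)
  next
    case False
    then have "prt s b = Some y" using y by auto
    then show ?thesis using gs_inv_prt_blue[OF b] gs_inv_prt_red by blast
  qed
  then have "y \<in> R" "b \<in> set (pref y)" using lst_subset_pref[of y] by auto
  then show "y \<in> set (pref b)" by (rule pref_red_sym)
qed

lemma gs_inv_round_blue:
  assumes b: "b \<in> B" and x: "prt (gs_round R B pref s) b = Some x"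
  shows "x \<in> R \<and> prt (gs_round R B pref s) x = Some b"
proof (cases "proposers R s b \<noteq> {}")
  case True
  have xb: "x = blue_choice R pref s b" using x True unfolding gs_round_blue[OF b] by simp
  have "x \<in> proposers R s b \<union> set_option (prt s b)"
    unfolding xb blue_choice_def
    by (rule most_preferred_in) (use pref_dist b blue_options_in_pref[OF b] True in auto)
  show ?thesis
  proof (cases "prt s b = Some x")
    case True
    then have xR: "x \<in> R" and "prt s x = Some b" using gs_inv_prt_blue[OF b] by blast+
    moreover have "\<not> sends_break R B pref s b x" using True xb by (simp add: sends_break_def)
    ultimately show ?thesis unfolding gs_round_red[OF xR]
      by (cases rule: gs_inv_red_step2_cases[OF xR]) auto
  next
    case False
    with \<open>x \<in> _\<close> have "x \<in> proposers R s b" by auto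
    then have xR: "x \<in> R" and "cnd s x = Some b" by (auto simp: proposers_def)
    moreover have "sends_accept R B pref s b x"
      using b \<open>proposers R s b \<noteq> {}\<close> False xb by (simp add: sends_accept_def)
    ultimately show ?thesis unfolding gs_round_red[OF xR]
      by (cases rule: gs_inv_red_step2_cases[OF xR]) auto
  qed
next
  case False
  then have "prt s b = Some x" using x unfolding gs_round_blue[OF b] by simp
  then have xR: "x \<in> R" and "prt s x = Some b" using gs_inv_prt_blue[OF b] by blast+
  moreover have "\<not> sends_break R B pref s b x" using False by (simp add: sends_break_def)
  ultimately show ?thesis unfolding gs_round_red[OF xR]
    by (cases rule: gs_inv_red_step2_cases[OF xR]) auto
qed

lemma gs_inv_round_lost:
  assumes e: "e \<in> lost (gs_round R B pref s)"
  shows "\<exists>r b. r \<in> R \<and> b \<in> B \<and> e = {r, b} \<and> e \<in> E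
     \<and> b \<notin> set (lst (gs_round R B pref s) r)"
proof (cases "e \<in> lost s")
  case True
  then obtain r b where rb: "r \<in> R" "b \<in> B" "e = {r, b}" "e \<in> E" "b \<notin> set (lst s r)"
    using gs_inv_lost by blast
  have "set (lst (gs_round R B pref s) r) \<subseteq> set (lst s r)"
    unfolding gs_round_red[OF rb(1)] by (rule red_step2_lst_subset[OF rb(1)])
  then show ?thesis using rb by blast
next
  case False
  then obtain r b where rb: "r \<in> R" "b \<in> snd (snd (red_step2 R B pref s r))" "e = {r, b}"
    using e unfolding lost_gs_round by blast
  note removed = red_step2_removed[OF rb(1,2)]
  then have "b \<in> set (pref r)" using lst_subset_pref[OF rb(1)] by fastforce
  then have "{r, b} \<in> E" "b \<in> B" using pref_red_edge rb(1) by auto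
  moreover have "b \<notin> set (lst (gs_round R B pref s) r)"
    unfolding gs_round_red[OF rb(1)] using removed by simp
  ultimately show ?thesis using rb by blast
qed

lemma gs_inv_round: "gs_inv (gs_round R B pref s)"
  unfolding gs_inv_def[of "gs_round R B pref s"]
  using gs_inv_round_red gs_inv_round_blue gs_inv_round_lost by blast

lemma weight_removeAll_hd_le:
  assumes r: "r \<in> R" and ne: "removeAll (hd (lst s r)) (lst s r) \<noteq> []"
  shows "w {r, hd (removeAll (hd (lst s r)) (lst s r))} \<le> w {r, hd (lst s r)}"
proof -
  obtain A where A: "lst s r = filter (\<lambda>x. x \<in> A) (pref r)"
    using gs_inv_lst_filter[OF r] by blast
  obtain a ys where a: "lst s r = a # ys" using ne by (cases "lst s r") auto
  have "distinct (pref r)" using pref_dist r by blast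
  then have "a \<notin> set ys" using A a by (metis distinct.simps(2) distinct_filter)
  then have ys: "removeAll (hd (lst s r)) (lst s r) = ys" using a by simp
  have "filter (\<lambda>x. x \<in> A) (pref r) = a # ys" using A a by simp
  moreover have "hd ys \<in> set ys" using ne ys by simp
  ultimately have "prefers pref r a (hd ys)" by (rule prefers_hd_filter)
  then show ?thesis using w_resp r unfolding ys by (simp add: a)
qed

lemma removed_head_bounds_potential:
  assumes r: "r \<in> R" and ne: "lst s r \<noteq> []" and b: "b = hd (lst s r)"
    and removed: "b \<in> snd (snd (red_step2 R B pref s r))"
    and lst': "lst (gs_round R B pref s) r = removeAll b (lst s r)"
    and ne': "lst (gs_round R B pref s) r \<noteq> []"
  shows "b \<in> B \<and> {r, b} \<in> lost (gs_round R B pref s) \<and> {r, b} \<notin> lost s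
     \<and> w {r, hd (lst (gs_round R B pref s) r)} \<le> w {r, b}"
proof (intro conjI)
  have "b \<in> set (lst s r)" using ne b by simp
  then show bB: "b \<in> B" using lst_subset_pref[OF r] pref_red_edge[OF r] by blast
  show "{r, b} \<in> lost (gs_round R B pref s)" unfolding lost_gs_round using r removed by blast
  show "{r, b} \<notin> lost s"
  proof
    assume "{r, b} \<in> lost s"
    then obtain r' b' where "r' \<in> R" "b' \<in> B" "{r, b} = {r', b'}" "b' \<notin> set (lst s r')"
      using gs_inv_lost by blast
    with red_blue_eq[OF r bB] have "b \<notin> set (lst s r)" by blast
    with \<open>b \<in> set (lst s r)\<close> show False by contradiction
  qed
  show "w {r, hd (lst (gs_round R B pref s) r)} \<le> w {r, b}"
    using weight_removeAll_hd_le[OF r] ne' unfolding lst' b .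
qed

lemma potential_le_new_lost_edge:
  assumes proposing: "free_reds_propose s" and r: "r \<in> R"
    and pz: "potential w (gs_round R B pref s) r \<noteq> 0"
  shows "\<exists>b\<in>B. {r, b} \<in> lost (gs_round R B pref s) \<and> {r, b} \<notin> lost s
     \<and> potential w (gs_round R B pref s) r \<le> w {r, b}"
proof -
  let ?s' = "gs_round R B pref s"
  have free: "prt ?s' r = None" and ne': "lst ?s' r \<noteq> []"
    and pot: "potential w ?s' r = w {r, hd (lst ?s' r)}"
    using pz unfolding potential_def by (auto split: if_splits)
  note bound = removed_head_bounds_potential[OF r _ _ _ _ ne']
  from r show ?thesis
  proof (cases rule: gs_inv_red_step2_cases)
    case idle
    then show ?thesis using proposing r ne' unfolding free_reds_propose_def gs_round_red[OF r] by auto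
  next
    case (broken b)
    have "lst s r \<noteq> [] \<and> b = hd (lst s r)" using gs_inv_prt_red[OF r broken(2)] .
    moreover have "lst ?s' r = removeAll b (lst s r)" using broken(4) gs_round_red(2)[OF r] by simp
    ultimately show ?thesis using bound[of b] broken(4) pot by auto
  next
    case (rejected b)
    have "lst s r \<noteq> [] \<and> b = hd (lst s r)" using gs_inv_cnd[OF r rejected(1)] by simp
    moreover have "lst ?s' r = removeAll b (lst s r)" using rejected(5) gs_round_red(2)[OF r] by simp
    ultimately show ?thesis using bound[of b] rejected(5) pot by auto
  next
    case (unanswered b)
    \<comment> \<open>b neither accepted nor rejected r, so r already was b's partner, yet r is free\<close>
    have "b \<in> set (lst s r)" using gs_inv_cnd[OF r unanswered(1)] by simp
    then have bB: "b \<in> B" using lst_subset_pref[OF r] pref_red_edge[OF r] by blast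
    have "r \<in> proposers R s b" using r unanswered(1) by (simp add: proposers_def)
    then have "prt s b = Some r"
      using unanswered(3,4) bB by (auto simp: sends_accept_def sends_reject_def)
    then show ?thesis using gs_inv_prt_blue[OF bB] unanswered(2) by simp
  qed (use free in \<open>simp_all add: gs_round_red[OF r]\<close>)
qed

lemma potential_sum_le_lost_gain:
  assumes proposing: "free_reds_propose s"
  shows "(\<Sum>r\<in>R. potential w (gs_round R B pref s) r)
     \<le> sum w (lost (gs_round R B pref s)) - sum w (lost s)"
proof -
  let ?s' = "gs_round R B pref s"
  let ?p = "potential w ?s'"
  define Rp where "Rp = {r \<in> R. ?p r \<noteq> 0}"
  define new_edge where "new_edge r =
    (SOME e. \<exists>b\<in>B. e = {r, b} \<and> e \<in> lost ?s' \<and> e \<notin> lost s \<and> ?p r \<le> w e)" for r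
  have new_edge: "\<exists>b\<in>B. new_edge r = {r, b} \<and> new_edge r \<in> lost ?s' - lost s \<and> ?p r \<le> w (new_edge r)"
    if "r \<in> Rp" for r
  proof -
    have "\<exists>e. \<exists>b\<in>B. e = {r, b} \<and> e \<in> lost ?s' \<and> e \<notin> lost s \<and> ?p r \<le> w e"
      using potential_le_new_lost_edge[OF proposing] that unfolding Rp_def by blast
    from someI_ex[OF this] show ?thesis unfolding new_edge_def by blast
  qed
  have lost_fin: "finite (lost ?s')" using lost_subset_E[OF gs_inv_round] finE by (rule finite_subset)
  have "sum ?p R = sum ?p Rp"
    by (rule sum.mono_neutral_right) (use finite_R in \<open>auto simp: Rp_def\<close>)
  also have "\<dots> \<le> sum (w \<circ> new_edge) Rp"
    by (rule sum_mono) (use new_edge in auto)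
  also have "\<dots> = sum w (new_edge ` Rp)"
  proof -
    have "inj_on new_edge Rp"
    proof
      fix x y assume "x \<in> Rp" "y \<in> Rp" "new_edge x = new_edge y"
      then show "x = y" using new_edge red_blue_eq unfolding Rp_def by (metis (no_types, lifting) mem_Collect_eq)
    qed
    then show ?thesis by (simp add: sum.reindex)
  qed
  also have "\<dots> \<le> sum w (lost ?s' - lost s)"
  proof (rule sum_mono2)
    show "finite (lost ?s' - lost s)" using lost_fin by simp
    show "new_edge ` Rp \<subseteq> lost ?s' - lost s" using new_edge by blast
    show "0 \<le> w e" if "e \<in> lost ?s' - lost s - new_edge ` Rp" for e
      using that lost_subset_E[OF gs_inv_round] w_pos by (auto intro: less_imp_le)
  qed
  also have "\<dots> = sum w (lost ?s') - sum w (lost s)"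
    by (rule sum_diff) (use lost_fin lost_gs_round in auto)
  finally show ?thesis .
qed

end

lemma gs_inv_state: "gs_inv (gs_state R B pref n)"
proof (induction n)
  case 0
  show ?case unfolding gs_state_def gs_inv_def gs_init_def by (auto intro: exI[of _ UNIV])
next
  case (Suc n)
  then show ?case unfolding gs_state_def by (simp add: gs_inv_round)
qed

end

theorem lemma2:
  fixes R B :: "'v set" and E :: "'v set set" and pref :: "'v \<Rightarrow> 'v list"
    and w :: "'v set \<Rightarrow> int" and i :: nat
  assumes disj: "R \<inter> B = {}"
    and edges: "\<forall>e\<in>E. \<exists>r b. r \<in> R \<and> b \<in> B \<and> e = {r, b}"
    and finE: "finite E"
    and no_isolated: "\<forall>v\<in>R \<union> B. \<exists>e\<in>E. v \<in> e"
    and pref_dist: "\<forall>v\<in>R \<union> B. distinct (pref v)"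
    and pref_set: "\<forall>v\<in>R \<union> B. set (pref v) = {u. {v, u} \<in> E}"
    and w_pos: "\<forall>e\<in>E. w e > 0"
    and w_resp: "\<forall>v\<in>R \<union> B. \<forall>x y. prefers pref v x y \<longrightarrow> w {v, x} \<ge> w {v, y}"
    and i: "2 \<le> i"
  shows "(\<Sum>r\<in>R. potential w (gs_state R B pref i) r)
           \<le> sum w (lost (gs_state R B pref i)) - sum w (lost (gs_state R B pref (i - 1)))"
proof -
  interpret gs_setting R B E pref w
    using disj edges finE no_isolated pref_dist pref_set w_pos w_resp by unfold_locales
  obtain n where n: "i = Suc (Suc n)" using i by (metis add_2_eq_Suc le_Suc_ex)
  let ?s = "gs_state R B pref (Suc n)"
  have "free_reds_propose ?s"
    unfolding gs_state_def funpow.simps comp_apply by (rule free_reds_propose_round)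
  from potential_sum_le_lost_gain[OF gs_inv_state this]
  show ?thesis unfolding n gs_state_def by simp
qed

end
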